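(* Let $\nu$ be a distribution on $[0,1]$ with density bounded by some constant $M>0$, and let $T_0\in\mathbb N$. Then for every time horizon $T\ge T_0$ the regret of the Explore-then-Commit algorithm with exploration time $T_0$ satisfies \[R_T\le T_0-\frac12+M(T-T_0)\Big(\frac2{T_0^2}+\frac1{T_0}\Big).\] Moreover, for every $T\in\mathbb N$, choosing $T_0:=\lceil\sqrt{MT}\rceil$ yields \[R_T\le 2.5+2\sqrt{MT}.\]
   Context: Brokerage setting: for $p,v_1,v_2\in[0,1]$ let $\mathrm{gft}(p,v_1,v_2):=(v_1\vee v_2-v_1\wedge v_2)\,\mathbb I\{v_1\wedge v_2\le p\le v_1\vee v_2\}$ ($\vee,\wedge$ = max, min). Valuations $V_1,V_2,\dots$ are i.i.d. with law $\nu$; at round $t$ the learner posts $P_t\in[0,1]$ and obtains $\mathrm{GFT}_t(P_t)$ with $\mathrm{GFT}_t(q):=\mathrm{gft}(q,V_{2t-1},V_{2t})$; in the two-bit feedback model only $\mathbb I\{P_t\le V_{2t-1}\}$ and $\mathbb I\{P_t\le V_{2t}\}$ are revealed after round $t$. Regret: $R_T:=\sup_{p\in[0,1]}\mathbb E[\sum_{t=1}^T\mathrm{GFT}_t(p)]-\mathbb E[\sum_{t=1}^T\mathrm{GFT}_t(P_t)]$. The Explore-then-Commit (ETC) algorithm with parameter $T_0$ posts $P_t:=t/T_0$ for $t=1,\dots,T_0$, and for all $t\ge T_0+1$ posts $P_t:=\frac1{2T_0}\sum_{s=1}^{T_0}\big(\mathbb I\{P_s\le V_{2s-1}\}+\mathbb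 I\{P_s\le V_{2s}\}\big)$. "Density bounded by $M$" means absolutely continuous w.r.t. Lebesgue measure with density $f\le M$. *)

theory Defs
  imports "HOL-Probability.Probability"
begin

definition gft :: "real \<Rightarrow> real \<Rightarrow> real \<Rightarrow> real" where
  "gft p v1 v2 = (max v1 v2 - min v1 v2) *
     (if min v1 v2 \<le> p \<and> p \<le> max v1 v2 then 1 else 0)"

text \<open>GFT_t(q) = gft(q, V_{2t-1}, V_{2t}) (rounds t start at 1).\<close>
definition GFT :: "(nat \<Rightarrow> 'a \<Rightarrow> real) \<Rightarrow> nat \<Rightarrow> real \<Rightarrow> 'a \<Rightarrow> real" where
  "GFT V t q \<omega> = gft q (V (2 * t - 1) \<omega>) (V (2 * t) \<omega>)"

definition regret :: "'a measure \<Rightarrow> (nat \<Rightarrow> 'a \<Rightarrow> real) \<Rightarrow> (nat \<Rightarrow> 'a \<Rightarrow> real) \<Rightarrow> nat \<Rightarrow> real" where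
  "regret \<Omega> V P T =
     (SUP p\<in>{0..1}. integral\<^sup>L \<Omega> (\<lambda>\<omega>. \<Sum>t=1..T. GFT V t p \<omega>))
     - integral\<^sup>L \<Omega> (\<lambda>\<omega>. \<Sum>t=1..T. GFT V t (P t \<omega>) \<omega>)"

text \<open>Explore-then-Commit with exploration time T0: posts t/T0 for t \<le> T0, then the
  empirical average of the two-bit feedback collected during exploration.\<close>
definition etc_price :: "nat \<Rightarrow> (nat \<Rightarrow> 'a \<Rightarrow> real) \<Rightarrow> nat \<Rightarrow> 'a \<Rightarrow> real" where
  "etc_price T0 V t \<omega> =
     (if t \<le> T0 then real t / real T0
      else (1 / (2 * real T0)) *
        (\<Sum>s=1..T0. ((if real s / real T0 \<le> V (2 * s - 1) \<omega> then 1 else 0)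
                    + (if real s / real T0 \<le> V (2 * s) \<omega> then 1 else 0))))"

end

theory Submission
  imports Defs
begin

text \<open>For two independent valuations of law \<nu> with mean \<mu>, a fixed price q earns
  gain q = 2 E[(\<mu> - V) 1{V \<le> q}] in expectation. This is maximal at q = \<mu>, where it is at most 1/2,
  and the density bound M gives gain \<mu> - gain q \<le> 2 M (q - \<mu>)^2. Hence the T0 exploration rounds
  lose at most T0/2 against the best fixed price. The committed price P averages 2 T0 independent
  feedback bits; its mean is a Riemann sum of the distribution function lying within 1/T0 below \<mu>,
  and its variance is at most 1/(2 T0), so E (P - \<mu>)^2 \<le> 1/T0^2 + 1/(2 T0). Since P is independent
  of the later valuations, each exploitation round loses at most 2 M times this. Choosing
  T0 = \<lceil>\<surd>(M T)\<rceil> balances the two terms, and the trivial bound T/2 covers the case T0 > T.\<close>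

section \<open>Independence and second moments\<close>

lemma (in prob_space) indep_var_integral_freeze:
  fixes h :: "'b \<times> 'b \<Rightarrow> real"
  assumes XY: "indep_var N1 X N2 Y"
    and h[measurable]: "h \<in> borel_measurable (N1 \<Otimes>\<^sub>M N2)"
    and int: "integrable M (\<lambda>\<omega>. h (X \<omega>, Y \<omega>))"
  defines "k \<equiv> \<lambda>x. expectation (\<lambda>\<omega>. h (x, Y \<omega>))"
  shows "integrable M (\<lambda>\<omega>. k (X \<omega>))"
    and "expectation (\<lambda>\<omega>. h (X \<omega>, Y \<omega>)) = expectation (\<lambda>\<omega>. k (X \<omega>))"
proof -
  have X[measurable]: "X \<in> measurable M N1" and Y[measurable]: "Y \<in> measurable M N2"
    using indep_var_rv1[OF XY] indep_var_rv2[OF XY] by auto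
  interpret P1: prob_space "distr M N1 X" by (rule prob_space_distr) (rule X)
  interpret P2: prob_space "distr M N2 Y" by (rule prob_space_distr) (rule Y)
  interpret P12: pair_prob_space "distr M N1 X" "distr M N2 Y" ..
  have joint: "distr M N1 X \<Otimes>\<^sub>M distr M N2 Y = distr M (N1 \<Otimes>\<^sub>M N2) (\<lambda>\<omega>. (X \<omega>, Y \<omega>))"
    using XY by (simp add: indep_var_distribution_eq)
  have inner: "(\<integral>y. h (x, y) \<partial>distr M N2 Y) = k x" if "x \<in> space N1" for x
    unfolding k_def using that by (intro integral_distr) auto
  have int_prod: "integrable (distr M N1 X \<Otimes>\<^sub>M distr M N2 Y) h"
    unfolding joint using int by (subst integrable_distr_eq) auto
  have int_k: "integrable (distr M N1 X) k"
  proof -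
    have "integrable (distr M N1 X) (\<lambda>x. \<integral>y. h (x, y) \<partial>distr M N2 Y) = integrable (distr M N1 X) k"
      by (rule Bochner_Integration.integrable_cong) (simp_all add: inner)
    with P12.integrable_fst'[OF int_prod] show ?thesis by simp
  qed
  have [measurable]: "k \<in> borel_measurable N1"
    using borel_measurable_integrable[OF int_k] by simp
  show "integrable M (\<lambda>\<omega>. k (X \<omega>))"
    using int_k by (simp add: integrable_distr_eq)
  have "expectation (\<lambda>\<omega>. h (X \<omega>, Y \<omega>)) = integral\<^sup>L (distr M N1 X \<Otimes>\<^sub>M distr M N2 Y) h"
    unfolding joint by (simp add: integral_distr)
  also have "\<dots> = (\<integral>x. (\<integral>y. h (x, y) \<partial>distr M N2 Y) \<partial>distr M N1 X)"
    by (rule P12.integral_fst'[OF int_prod, symmetric])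
  also have "\<dots> = integral\<^sup>L (distr M N1 X) k"
    by (intro Bochner_Integration.integral_cong) (auto simp: inner)
  also have "\<dots> = expectation (\<lambda>\<omega>. k (X \<omega>))"
    by (simp add: integral_distr)
  finally show "expectation (\<lambda>\<omega>. h (X \<omega>, Y \<omega>)) = expectation (\<lambda>\<omega>. k (X \<omega>))" .
qed

lemma (in prob_space) expectation_square_sum_uncorrelated_le:
  fixes X :: "'i \<Rightarrow> 'a \<Rightarrow> real"
  assumes "finite I"
    and meas: "\<And>i. i \<in> I \<Longrightarrow> X i \<in> borel_measurable M"
    and bounded: "\<And>i \<omega>. i \<in> I \<Longrightarrow> \<bar>X i \<omega>\<bar> \<le> 1"
    and uncorrelated: "\<And>i j. i \<in> I \<Longrightarrow> j \<in> I \<Longrightarrow> i \<noteq> j \<Longrightarrow> expectation (\<lambda>\<omega>. X i \<omega> * X j \<omega>) = 0"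
  shows "expectation (\<lambda>\<omega>. (\<Sum>i\<in>I. X i \<omega>)\<^sup>2) \<le> card I"
proof -
  have int: "integrable M (\<lambda>\<omega>. X i \<omega> * X j \<omega>)" if "i \<in> I" "j \<in> I" for i j
  proof (rule integrable_const_bound[where B=1])
    show "AE \<omega> in M. norm (X i \<omega> * X j \<omega>) \<le> 1"
      using bounded[OF that(1)] bounded[OF that(2)] by (simp add: abs_mult mult_le_one)
    show "(\<lambda>\<omega>. X i \<omega> * X j \<omega>) \<in> borel_measurable M"
      using meas[OF that(1)] meas[OF that(2)] by measurable
  qed
  have diagonal: "expectation (\<lambda>\<omega>. X i \<omega> * X i \<omega>) \<le> 1" if "i \<in> I" for i
  proof -
    have "X i \<omega> * X i \<omega> \<le> 1" for \<omega>
      using mult_le_one[OF bounded[OF that, of \<omega>] _ bounded[OF that, of \<omega>]]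
      by (simp add: abs_mult_self_eq)
    then have "expectation (\<lambda>\<omega>. X i \<omega> * X i \<omega>) \<le> expectation (\<lambda>\<omega>. 1)"
      using int[OF that that] by (intro integral_mono) auto
    then show ?thesis by (simp add: prob_space)
  qed
  have "expectation (\<lambda>\<omega>. (\<Sum>i\<in>I. X i \<omega>)\<^sup>2)
      = (\<Sum>i\<in>I. \<Sum>j\<in>I. expectation (\<lambda>\<omega>. X i \<omega> * X j \<omega>))"
    by (simp add: power2_eq_square sum_product Bochner_Integration.integral_sum int)
  also have "\<dots> \<le> (\<Sum>i\<in>I. \<Sum>j\<in>I. if i = j then 1 else 0)"
    by (intro sum_mono) (auto simp: uncorrelated diagonal)
  also have "\<dots> = card I"
    using \<open>finite I\<close> by simp
  finally show ?thesis .
qed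

lemma (in prob_space) expectation_square_diff_const:
  fixes X :: "'a \<Rightarrow> real"
  assumes "integrable M X" "integrable M (\<lambda>\<omega>. (X \<omega>)\<^sup>2)"
  shows "expectation (\<lambda>\<omega>. (X \<omega> - c)\<^sup>2) = variance X + (expectation X - c)\<^sup>2"
proof -
  have "(\<lambda>\<omega>. (X \<omega> - c)\<^sup>2) = (\<lambda>\<omega>. ((X \<omega>)\<^sup>2 - 2 * c * X \<omega>) + c\<^sup>2)"
    by (simp add: fun_eq_iff power2_diff)
  then have "expectation (\<lambda>\<omega>. (X \<omega> - c)\<^sup>2) = expectation (\<lambda>\<omega>. (X \<omega>)\<^sup>2) - 2 * c * expectation X + c\<^sup>2"
    using assms by (simp add: Bochner_Integration.integral_add Bochner_Integration.integral_diff prob_space)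
  then show ?thesis
    using variance_eq[OF assms] by (simp add: power2_diff)
qed


section \<open>Counting grid points\<close>

lemma sum_indicator_le_eq_min_floor:
  fixes x :: real
  assumes "0 \<le> x"
  shows "(\<Sum>s=1..N. if real s \<le> x then 1 else 0 :: real) = real (min N (nat \<lfloor>x\<rfloor>))"
proof (induction N)
  case 0
  then show ?case by simp
next
  case (Suc N)
  have "real (Suc N) \<le> x \<longleftrightarrow> Suc N \<le> nat \<lfloor>x\<rfloor>"
    using assms
    by (metis le_nat_floor nat_le_real_less of_nat_floor of_nat_le_iff order.trans less_eq_real_def)
  with Suc show ?case
    by (cases "real (Suc N) \<le> x") (auto simp: min_def)
qed

lemma grid_count_bounds:
  fixes v :: real
  assumes "n \<ge> 1" "0 \<le> v" "v \<le> 1"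
  shows "v - 1 / real n \<le> (\<Sum>s=1..n. if real s / real n \<le> v then 1 else 0) / real n"
    and "(\<Sum>s=1..n. if real s / real n \<le> v then 1 else 0) / real n \<le> v"
proof -
  have n: "real n > 0"
    using assms by simp
  have "(\<Sum>s=1..n. if real s / real n \<le> v then 1 else 0 :: real)
      = (\<Sum>s=1..n. if real s \<le> real n * v then 1 else 0)"
    using n by (intro sum.cong) (auto simp: divide_le_eq mult.commute)
  also have "\<dots> = real (min n (nat \<lfloor>real n * v\<rfloor>))"
    using assms by (intro sum_indicator_le_eq_min_floor) simp
  also have "\<dots> = real (nat \<lfloor>real n * v\<rfloor>)"
  proof -
    have "real n * v \<le> real n"
      using assms by (simp add: mult_left_le)
    then have "\<lfloor>real n * v\<rfloor> \<le> int n"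
      by (metis floor_mono floor_of_nat)
    then show ?thesis
      by (simp add: min_absorb2)
  qed
  also have "\<dots> = of_int \<lfloor>real n * v\<rfloor>"
    using assms by simp
  finally have count: "(\<Sum>s=1..n. if real s / real n \<le> v then 1 else 0 :: real) = of_int \<lfloor>real n * v\<rfloor>" .
  define c where "c = (of_int \<lfloor>real n * v\<rfloor> :: real)"
  have "real n * v - 1 \<le> c" "c \<le> real n * v"
    unfolding c_def by linarith+
  moreover have "v - 1 / real n = (real n * v - 1) / real n" "v = real n * v / real n"
    using n by (simp_all add: field_simps)
  ultimately have "v - 1 / real n \<le> c / real n" "c / real n \<le> v"
    using n by (metis divide_right_mono less_imp_le)+
  then show "v - 1 / real n \<le> (\<Sum>s=1..n. if real s / real n \<le> v then 1 else 0) / real n"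
    and "(\<Sum>s=1..n. if real s / real n \<le> v then 1 else 0) / real n \<le> v"
    unfolding count c_def by simp_all
qed

lemma sum_pairs_atLeastAtMost:
  fixes g :: "nat \<Rightarrow> 'b::comm_monoid_add"
  shows "(\<Sum>s=1..n. g (2 * s - 1) + g (2 * s)) = (\<Sum>i=1..2 * n. g i)"
proof (induction n)
  case 0
  then show ?case by simp
next
  case (Suc n)
  then show ?case
    by (simp add: sum.cl_ivl_Suc add.assoc)
qed

section \<open>Gain from trade and the exploration feedback\<close>

lemma gft_nonneg: "0 \<le> gft q x y"
  by (simp add: gft_def)

lemma gft_le_1: "0 \<le> x \<Longrightarrow> x \<le> 1 \<Longrightarrow> 0 \<le> y \<Longrightarrow> y \<le> 1 \<Longrightarrow> gft q x y \<le> 1"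
  by (auto simp: gft_def)

lemma borel_measurable_gft[measurable]:
  assumes [measurable]: "p \<in> borel_measurable M" "x \<in> borel_measurable M" "y \<in> borel_measurable M"
  shows "(\<lambda>\<omega>. gft (p \<omega>) (x \<omega>) (y \<omega>)) \<in> borel_measurable M"
  unfolding gft_def by measurable

text \<open>A trade at price q happens iff one valuation is at most q and the other at least q;
  splitting by which one is the buyer makes every term a product of a function of x and a function of y.\<close>
lemma gft_split:
  "gft q x y = indicator {..q} x * (y * indicator {q..} y) - (x * indicator {..q} x) * indicator {q..} y
     + (x * indicator {q..} x) * indicator {..q} y - indicator {q..} x * (y * indicator {..q} y)"
  by (auto simp: gft_def indicator_def max_def min_def)

text \<open>Valuation i is seen in exploration round (i + 1) div 2, at the price of that round.\<close>
definition exploration_bit :: "nat \<Rightarrow> nat \<Rightarrow> real \<Rightarrow> real" where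
  "exploration_bit n i v = (if real ((i + 1) div 2) / real n \<le> v then 1 else 0)"

definition commit_price :: "nat \<Rightarrow> (nat \<Rightarrow> real) \<Rightarrow> real" where
  "commit_price n v = (1 / (2 * real n)) * (\<Sum>i=1..2 * n. exploration_bit n i (v i))"

lemma exploration_bit_round:
  assumes "s \<ge> 1"
  shows "exploration_bit n (2 * s - 1) v = (if real s / real n \<le> v then 1 else 0)"
    and "exploration_bit n (2 * s) v = (if real s / real n \<le> v then 1 else 0)"
proof -
  have "(2 * s - 1 + 1) div 2 = s" "(2 * s + 1) div 2 = s"
    using assms by presburger+
  then show "exploration_bit n (2 * s - 1) v = (if real s / real n \<le> v then 1 else 0)"
    and "exploration_bit n (2 * s) v = (if real s / real n \<le> v then 1 else 0)"
    by (simp_all add: exploration_bit_def)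
qed

lemma borel_measurable_exploration_bit[measurable]: "exploration_bit n i \<in> borel_measurable borel"
  unfolding exploration_bit_def[abs_def] by measurable

lemma commit_price_cong:
  assumes "\<And>i. i \<in> {1..2 * n} \<Longrightarrow> v i = w i"
  shows "commit_price n v = commit_price n w"
  using assms by (simp add: commit_price_def)

lemma borel_measurable_commit_price:
  assumes "{1..2 * n} \<subseteq> I"
  shows "commit_price n \<in> borel_measurable (PiM I (\<lambda>_. borel))"
  unfolding commit_price_def[abs_def] exploration_bit_def
proof (intro borel_measurable_times borel_measurable_const borel_measurable_sum)
  fix i
  assume "i \<in> {1..2 * n}"
  with assms have [measurable]: "(\<lambda>x. x i) \<in> borel_measurable (PiM I (\<lambda>_. borel :: real measure))"
    by (intro measurable_component_singleton) auto
  show "(\<lambda>x. if real ((i + 1) div 2) / real n \<le> x i then 1 else 0 :: real) \<in> borel_measurable (PiM I (\<lambda>_. borel))"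
    by measurable
qed

lemma etc_price_eq_commit_price:
  assumes "n < t"
  shows "etc_price n V t \<omega> = commit_price n (\<lambda>i. V i \<omega>)"
proof -
  have "(\<Sum>s=1..n. (if real s / real n \<le> V (2 * s - 1) \<omega> then 1 else 0)
                  + (if real s / real n \<le> V (2 * s) \<omega> then 1 else 0))
      = (\<Sum>s=1..n. exploration_bit n (2 * s - 1) (V (2 * s - 1) \<omega>) + exploration_bit n (2 * s) (V (2 * s) \<omega>))"
    using exploration_bit_round by (intro sum.cong refl) simp
  also have "\<dots> = (\<Sum>i=1..2 * n. exploration_bit n i (V i \<omega>))"
    by (rule sum_pairs_atLeastAtMost)
  finally show ?thesis
    using assms by (simp add: etc_price_def commit_price_def)
qed

lemma commit_price_unit_interval:
  assumes "n \<ge> 1"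
  shows "0 \<le> commit_price n v \<and> commit_price n v \<le> 1"
proof -
  have "(\<Sum>i=1..2 * n. exploration_bit n i (v i)) \<le> (\<Sum>i=1..2 * n. 1)"
    by (intro sum_mono) (simp add: exploration_bit_def)
  moreover have "0 \<le> (\<Sum>i=1..2 * n. exploration_bit n i (v i))"
    by (intro sum_nonneg) (simp add: exploration_bit_def)
  ultimately show ?thesis
    using assms by (auto simp: commit_price_def field_simps)
qed

lemma commit_price_const_bounds:
  assumes "n \<ge> 1" "0 \<le> v" "v \<le> 1"
  shows "v - 1 / real n \<le> commit_price n (\<lambda>_. v) \<and> commit_price n (\<lambda>_. v) \<le> v"
proof -
  have "(\<Sum>i=1..2 * n. exploration_bit n i v)
      = (\<Sum>s=1..n. exploration_bit n (2 * s - 1) v + exploration_bit n (2 * s) v)"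
    by (rule sum_pairs_atLeastAtMost[symmetric])
  also have "\<dots> = (\<Sum>s=1..n. 2 * (if real s / real n \<le> v then 1 else 0))"
    using exploration_bit_round by (intro sum.cong refl) simp
  finally have "commit_price n (\<lambda>_. v) = (\<Sum>s=1..n. if real s / real n \<le> v then 1 else 0) / real n"
    by (simp add: commit_price_def sum_distrib_left[symmetric])
  then show ?thesis
    using grid_count_bounds[OF assms] by simp
qed

section \<open>Valuation laws with bounded density\<close>

locale bounded_density_law = prob_space \<nu> for \<nu> :: "real measure" +
  fixes f :: "real \<Rightarrow> real" and M :: real
  assumes borel_measurable_density[measurable]: "f \<in> borel_measurable borel"
    and law_eq_density: "\<nu> = density lborel (\<lambda>x. ennreal (f x))"
    and emeasure_unit_interval: "emeasure \<nu> {0..1} = 1"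
    and density_bounds: "\<And>x. 0 \<le> f x \<and> f x \<le> M"
begin

lemma space_law[simp]: "space \<nu> = UNIV" and sets_law[simp, measurable_cong]: "sets \<nu> = sets borel"
  by (simp_all add: law_eq_density)

lemma prob_UNIV[simp]: "prob UNIV = 1"
  using prob_space by simp

lemma AE_unit_interval: "AE v in \<nu>. 0 \<le> v \<and> v \<le> 1"
proof -
  have "emeasure \<nu> (UNIV - {0..1}) = emeasure \<nu> UNIV - emeasure \<nu> {0..1}"
    by (rule emeasure_Diff) auto
  also have "\<dots> = 0"
    using emeasure_space_1 emeasure_unit_interval by simp
  finally show ?thesis
    by (intro AE_I'[of "UNIV - {0..1}"]) (auto simp: null_sets_def)
qed

lemma integrable_bounded_on_unit_interval:
  fixes g :: "real \<Rightarrow> real"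
  assumes "g \<in> borel_measurable borel" "\<And>v. 0 \<le> v \<Longrightarrow> v \<le> 1 \<Longrightarrow> \<bar>g v\<bar> \<le> B"
  shows "integrable \<nu> g"
proof (rule integrable_const_bound[where B=B])
  show "AE v in \<nu>. norm (g v) \<le> B"
    using AE_unit_interval by eventually_elim (use assms(2) in auto)
qed (use assms(1) in simp)

lemma emeasure_le_lborel: "A \<in> sets borel \<Longrightarrow> emeasure \<nu> A \<le> ennreal M * emeasure lborel A"
  unfolding law_eq_density
  by (auto simp: emeasure_density density_bounds nn_integral_cmult_indicator[symmetric]
      intro!: nn_integral_mono mult_right_mono ennreal_leI)

lemma density_bound_pos: "0 < M"
proof -
  have "1 \<le> ennreal M"
    using emeasure_le_lborel[of "{0..1}"] emeasure_unit_interval by simp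
  then show ?thesis
    by (simp add: ennreal_le_iff2 split: if_splits)
qed

lemma measure_singleton: "measure \<nu> {q} = 0"
  using emeasure_le_lborel[of "{q}"] by (simp add: measure_def)

lemma measure_Ioc_le: "a \<le> b \<Longrightarrow> measure \<nu> {a<..b} \<le> M * (b - a)"
  using emeasure_le_lborel[of "{a<..b}"] density_bound_pos
  by (simp add: emeasure_eq_measure ennreal_mult[symmetric] ennreal_le_iff)

lemma integrable_id: "integrable \<nu> (\<lambda>v. v)"
  by (rule integrable_bounded_on_unit_interval[where B=1]) auto

lemma integrable_exploration_bit: "integrable \<nu> (exploration_bit n i)"
  by (rule integrable_bounded_on_unit_interval[where B=1]) (auto simp: exploration_bit_def)

definition mean :: real where
  "mean = expectation (\<lambda>v. v)"

lemma mean_unit_interval: "0 \<le> mean \<and> mean \<le> 1"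
proof -
  have "0 \<le> mean"
    unfolding mean_def using AE_unit_interval by (intro integral_nonneg_AE) auto
  moreover have "mean \<le> expectation (\<lambda>v. 1)"
    unfolding mean_def by (rule integral_mono_AE) (use integrable_id AE_unit_interval in auto)
  ultimately show ?thesis
    by simp
qed

text \<open>The expected gain from trade at price q of two independent valuations of law \<nu>
  (see expectation_gft_valuations below).\<close>
definition gain :: "real \<Rightarrow> real" where
  "gain q = 2 * expectation (\<lambda>v. (mean - v) * indicator {..q} v)"

lemma integrable_gain_integrand: "integrable \<nu> (\<lambda>v. (mean - v) * indicator {..q} v)"
  by (rule integrable_bounded_on_unit_interval[where B="\<bar>mean\<bar> + 1"]) (auto simp: indicator_def)

lemma gain_eq_products:
  "2 * (prob {..q} * expectation (\<lambda>v. v * indicator {q..} v)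
      - expectation (\<lambda>v. v * indicator {..q} v) * prob {q..})
   = gain q"
proof -
  let ?A = "expectation (\<lambda>v. v * indicator {..q} v :: real)"
  have int_ind: "integrable \<nu> (indicator S :: real \<Rightarrow> real)" if "S \<in> sets borel" for S
    using that by (intro integrable_bounded_on_unit_interval[where B=1]) (auto simp: indicator_def)
  have int_A: "integrable \<nu> (\<lambda>v. v * indicator {..q} v :: real)"
    by (rule integrable_bounded_on_unit_interval[where B=1]) (auto simp: indicator_def)
  \<comment> \<open>{q..} and {..q} overlap only in the null set {q}\<close>
  have split_upper: "indicator {q..} = (\<lambda>v. 1 - indicator {..q} v + indicator {q} v :: real)"
    by (auto simp: indicator_def fun_eq_iff)
  have "prob {q..} = expectation (indicator {q..} :: real \<Rightarrow> real)"
    by simp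
  also have "\<dots> = expectation (\<lambda>v. 1 - indicator {..q} v + indicator {q} v :: real)"
    unfolding split_upper ..
  also have "\<dots> = 1 - prob {..q}"
    using int_ind measure_singleton[of q]
    by (simp add: Bochner_Integration.integral_add Bochner_Integration.integral_diff)
  finally have upper: "prob {q..} = 1 - prob {..q}" .
  have "(\<lambda>v. v * indicator {q..} v) = (\<lambda>v. v - v * indicator {..q} v + q * indicator {q} v :: real)"
    by (auto simp: indicator_def fun_eq_iff)
  then have upper_id: "expectation (\<lambda>v. v * indicator {q..} v) = mean - ?A"
    using int_ind int_A integrable_id measure_singleton[of q]
    by (simp add: Bochner_Integration.integral_add Bochner_Integration.integral_diff mean_def)
  have "gain q = 2 * (mean * prob {..q} - ?A)"
    using int_ind int_A
    by (simp add: gain_def left_diff_distrib Bochner_Integration.integral_diff)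
  then show ?thesis
    by (simp add: upper upper_id algebra_simps)
qed

lemma gain_le_gain_mean: "gain q \<le> gain mean"
  unfolding gain_def
proof (rule mult_left_mono, rule integral_mono[OF integrable_gain_integrand integrable_gain_integrand])
  fix v :: real
  show "(mean - v) * indicator {..q} v \<le> (mean - v) * indicator {..mean} v"
    by (cases "v \<le> q"; cases "v \<le> mean") (auto simp: indicator_def)
qed simp

lemma gain_mean_le_half: "gain mean \<le> 1/2"
proof -
  have "expectation (\<lambda>v. (mean - v) * indicator {..mean} v) \<le> expectation (\<lambda>v. mean - mean * v)"
  proof (rule integral_mono_AE)
    show "AE v in \<nu>. (mean - v) * indicator {..mean} v \<le> mean - mean * v"
      using AE_unit_interval
    proof eventually_elim
      case (elim v)
      then have "v * mean \<le> v" "v * mean \<le> mean"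
        using mean_unit_interval by (auto intro: mult_left_le mult_left_le_one_le)
      with elim show ?case
        by (auto simp: indicator_def algebra_simps)
    qed
  qed (use integrable_gain_integrand integrable_id in auto)
  also have "\<dots> = mean - mean * mean"
    using integrable_id by (simp add: Bochner_Integration.integral_diff mean_def)
  finally have "gain mean \<le> 2 * (mean - mean * mean)"
    unfolding gain_def by simp
  also have "\<dots> \<le> 1/2"
    using sum_squares_ge_zero[of "2 * mean - 1" 0] by (simp add: power2_eq_square algebra_simps)
  finally show ?thesis .
qed

text \<open>The integrands of gain mean and gain q differ only between q and mean, by at most
  \<bar>q - mean\<bar>, and the density bound makes that interval have mass at most M \<bar>q - mean\<bar>.\<close>
lemma gain_mean_minus_gain_le: "gain mean - gain q \<le> 2 * M * (q - mean)\<^sup>2"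
proof -
  define lo hi where "lo = min q mean" and "hi = max q mean"
  have width: "hi - lo = \<bar>q - mean\<bar>"
    by (auto simp: lo_def hi_def)
  have "gain mean - gain q
      = 2 * expectation (\<lambda>v. (mean - v) * indicator {..mean} v - (mean - v) * indicator {..q} v)"
    unfolding gain_def using integrable_gain_integrand
    by (simp add: Bochner_Integration.integral_diff)
  also have "\<dots> \<le> 2 * expectation (\<lambda>v. \<bar>q - mean\<bar> * indicator {lo<..hi} v)"
  proof (intro mult_left_mono integral_mono)
    show "integrable \<nu> (\<lambda>v. \<bar>q - mean\<bar> * indicator {lo<..hi} v)"
      by (rule integrable_bounded_on_unit_interval[where B="\<bar>q - mean\<bar>"]) (auto simp: indicator_def)
    fix v
    show "(mean - v) * indicator {..mean} v - (mean - v) * indicator {..q} v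
        \<le> \<bar>q - mean\<bar> * indicator {lo<..hi} v"
      by (auto simp: indicator_def lo_def hi_def)
  qed (use integrable_gain_integrand in auto)
  also have "\<dots> = 2 * (\<bar>q - mean\<bar> * measure \<nu> {lo<..hi})"
    by simp
  also have "\<dots> \<le> 2 * (\<bar>q - mean\<bar> * (M * (hi - lo)))"
    using measure_Ioc_le[of lo hi] by (auto simp: lo_def hi_def intro!: mult_left_mono)
  also have "\<dots> = 2 * M * (q - mean)\<^sup>2"
    using width by (simp add: power2_eq_square abs_mult_self_eq)
  finally show ?thesis .
qed

lemma expectation_commit_price_const_bounds:
  assumes "n \<ge> 1"
  shows "mean - 1 / real n \<le> expectation (\<lambda>v. commit_price n (\<lambda>_. v))
    \<and> expectation (\<lambda>v. commit_price n (\<lambda>_. v)) \<le> mean"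
proof -
  have integrable: "integrable \<nu> (\<lambda>v. commit_price n (\<lambda>_. v))"
  proof (rule integrable_bounded_on_unit_interval[where B=1])
    show "(\<lambda>v. commit_price n (\<lambda>_. v)) \<in> borel_measurable borel"
      unfolding commit_price_def exploration_bit_def by measurable
    show "\<bar>commit_price n (\<lambda>_. v)\<bar> \<le> 1" if "0 \<le> v" "v \<le> 1" for v
      using commit_price_unit_interval[OF assms, of "\<lambda>_. v"] by simp
  qed
  have "expectation (\<lambda>v. v - 1 / real n) \<le> expectation (\<lambda>v. commit_price n (\<lambda>_. v))"
    using integrable integrable_id
    by (intro integral_mono_AE eventually_mono[OF AE_unit_interval])
       (auto dest: commit_price_const_bounds[OF assms])
  moreover have "expectation (\<lambda>v. commit_price n (\<lambda>_. v)) \<le> expectation (\<lambda>v. v)"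
    using integrable integrable_id
    by (intro integral_mono_AE eventually_mono[OF AE_unit_interval])
       (auto dest: commit_price_const_bounds[OF assms])
  ultimately show ?thesis
    using integrable_id by (simp add: Bochner_Integration.integral_diff mean_def)
qed

end

section \<open>Regret of Explore-then-Commit\<close>

lemma etc_tuning_arith:
  fixes s x A :: real
  assumes "0 < s" "s \<le> x" "x < s + 1" "0 \<le> A" "A \<le> s\<^sup>2"
  shows "x - 1/2 + A * (2 / x\<^sup>2 + 1 / x) \<le> 2.5 + 2 * s"
proof -
  have x: "0 < x"
    using assms by linarith
  have "A \<le> x\<^sup>2"
    using assms power_mono[of s x 2] by linarith
  then have quadratic: "A * (2 / x\<^sup>2) \<le> 2"
    using x by (simp add: field_simps)
  have "s * s \<le> s * x"
    using assms by (intro mult_left_mono) auto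
  then have "A \<le> s * x"
    using assms(5) unfolding power2_eq_square by linarith
  then have linear: "A * (1 / x) \<le> s"
    using x by (simp add: field_simps)
  show ?thesis
    using quadratic linear assms by (simp add: distrib_left)
qed

locale brokerage = law: bounded_density_law \<nu> f M + prob_space \<Omega>
  for \<nu> :: "real measure" and f M and \<Omega> :: "'a measure" +
  fixes V :: "nat \<Rightarrow> 'a \<Rightarrow> real"
  assumes borel_measurable_valuation: "\<And>i. i \<ge> 1 \<Longrightarrow> V i \<in> borel_measurable \<Omega>"
    and indep_valuations: "indep_vars (\<lambda>_. borel) V {1..}"
    and distr_valuation: "\<And>i. i \<ge> 1 \<Longrightarrow> distr \<Omega> borel (V i) = \<nu>"
begin

lemma expectation_valuation:
  fixes g :: "real \<Rightarrow> real"
  assumes "i \<ge> 1" "g \<in> borel_measurable borel"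
  shows "expectation (\<lambda>\<omega>. g (V i \<omega>)) = law.expectation g"
  using integral_distr[OF borel_measurable_valuation[OF assms(1)] assms(2)] distr_valuation[OF assms(1)]
  by simp

lemma integrable_valuation:
  fixes g :: "real \<Rightarrow> real"
  assumes "i \<ge> 1" "g \<in> borel_measurable borel" "integrable \<nu> g"
  shows "integrable \<Omega> (\<lambda>\<omega>. g (V i \<omega>))"
  using integrable_distr_eq[OF borel_measurable_valuation[OF assms(1)] assms(2)]
    distr_valuation[OF assms(1)] assms(3)
  by simp

lemma AE_valuation_unit_interval:
  assumes "i \<ge> 1"
  shows "AE \<omega> in \<Omega>. 0 \<le> V i \<omega> \<and> V i \<omega> \<le> 1"
proof -
  have "AE v in distr \<Omega> borel (V i). 0 \<le> v \<and> v \<le> 1"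
    unfolding distr_valuation[OF assms] by (rule law.AE_unit_interval)
  from AE_distrD[OF borel_measurable_valuation[OF assms] this] show ?thesis .
qed

lemma indep_var_valuations:
  assumes "a \<ge> 1" "b \<ge> 1" "a \<noteq> b"
  shows "indep_var borel (V a) borel (V b)"
proof -
  have "indep_var (PiM {a} (\<lambda>_. borel)) (\<lambda>\<omega>. restrict (\<lambda>i. V i \<omega>) {a})
                  (PiM {b} (\<lambda>_. borel)) (\<lambda>\<omega>. restrict (\<lambda>i. V i \<omega>) {b})"
    using indep_valuations assms by (intro indep_var_restrict) auto
  from indep_var_compose[OF this, of "\<lambda>x. x a" borel "\<lambda>x. x b" borel]
  show ?thesis
    by (simp add: comp_def)
qed

lemma indep_valuations_product:
  fixes g h :: "real \<Rightarrow> real"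
  assumes ab: "a \<ge> 1" "b \<ge> 1" "a \<noteq> b"
    and g: "g \<in> borel_measurable borel" "integrable \<nu> g"
    and h: "h \<in> borel_measurable borel" "integrable \<nu> h"
  shows "integrable \<Omega> (\<lambda>\<omega>. g (V a \<omega>) * h (V b \<omega>))"
    and "expectation (\<lambda>\<omega>. g (V a \<omega>) * h (V b \<omega>)) = law.expectation g * law.expectation h"
proof -
  have indep: "indep_var borel (g \<circ> V a) borel (h \<circ> V b)"
    using indep_var_compose[OF indep_var_valuations[OF ab] g(1) h(1)] .
  have int: "integrable \<Omega> (g \<circ> V a)" "integrable \<Omega> (h \<circ> V b)"
    using integrable_valuation[OF ab(1) g] integrable_valuation[OF ab(2) h] by (simp_all add: comp_def)
  show "integrable \<Omega> (\<lambda>\<omega>. g (V a \<omega>) * h (V b \<omega>))"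
    using indep_var_integrable[OF indep int] by (simp add: comp_def)
  show "expectation (\<lambda>\<omega>. g (V a \<omega>) * h (V b \<omega>)) = law.expectation g * law.expectation h"
    using indep_var_lebesgue_integral[OF indep int]
      expectation_valuation[OF ab(1) g(1)] expectation_valuation[OF ab(2) h(1)]
    by (simp add: comp_def)
qed

lemma expectation_gft_valuations:
  assumes ab: "a \<ge> 1" "b \<ge> 1" "a \<noteq> b"
  shows "expectation (\<lambda>\<omega>. gft q (V a \<omega>) (V b \<omega>)) = law.gain q"
proof -
  define L U LV UV :: "real \<Rightarrow> real"
    where "L = indicator {..q}" and "U = indicator {q..}"
      and "LV = (\<lambda>v. v * indicator {..q} v)" and "UV = (\<lambda>v. v * indicator {q..} v)"
  have meas: "L \<in> borel_measurable borel" "U \<in> borel_measurable borel"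
    "LV \<in> borel_measurable borel" "UV \<in> borel_measurable borel"
    by (simp_all add: L_def U_def LV_def UV_def)
  have int: "integrable \<nu> L" "integrable \<nu> U" "integrable \<nu> LV" "integrable \<nu> UV"
    using meas by (auto intro!: law.integrable_bounded_on_unit_interval[where B=1]
        simp: L_def U_def LV_def UV_def indicator_def)
  note prod = indep_valuations_product[OF ab]
  have "expectation (\<lambda>\<omega>. gft q (V a \<omega>) (V b \<omega>))
      = expectation (\<lambda>\<omega>. L (V a \<omega>) * UV (V b \<omega>) - LV (V a \<omega>) * U (V b \<omega>)
          + UV (V a \<omega>) * L (V b \<omega>) - U (V a \<omega>) * LV (V b \<omega>))"
    by (simp add: gft_split L_def U_def LV_def UV_def)
  also have "\<dots> = 2 * (law.expectation L * law.expectation UV - law.expectation LV * law.expectation U)"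
    using prod[OF meas(1) int(1) meas(4) int(4)] prod[OF meas(3) int(3) meas(2) int(2)]
      prod[OF meas(4) int(4) meas(1) int(1)] prod[OF meas(2) int(2) meas(3) int(3)]
    by (simp add: Bochner_Integration.integral_diff Bochner_Integration.integral_add)
  also have "\<dots> = law.gain q"
    using law.gain_eq_products[of q] by (simp add: L_def U_def LV_def UV_def)
  finally show ?thesis .
qed

lemma integrable_gft_valuations:
  assumes "a \<ge> 1" "b \<ge> 1" and [measurable]: "Q \<in> borel_measurable \<Omega>"
  shows "integrable \<Omega> (\<lambda>\<omega>. gft (Q \<omega>) (V a \<omega>) (V b \<omega>))"
proof -
  note [measurable] = borel_measurable_valuation[OF assms(1)] borel_measurable_valuation[OF assms(2)]
  have "AE \<omega> in \<Omega>. norm (gft (Q \<omega>) (V a \<omega>) (V b \<omega>)) \<le> 1"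
    using AE_valuation_unit_interval[OF assms(1)] AE_valuation_unit_interval[OF assms(2)]
    by eventually_elim (simp add: gft_nonneg gft_le_1)
  then show ?thesis
    by (intro integrable_const_bound[where B=1]) measurable
qed

definition committed_price :: "nat \<Rightarrow> 'a \<Rightarrow> real" where
  "committed_price n \<omega> = commit_price n (\<lambda>i. V i \<omega>)"

lemma borel_measurable_committed_price[measurable]: "committed_price n \<in> borel_measurable \<Omega>"
proof -
  have "(\<lambda>\<omega>. exploration_bit n i (V i \<omega>)) \<in> borel_measurable \<Omega>" if "i \<in> {1..2 * n}" for i
  proof -
    have [measurable]: "V i \<in> borel_measurable \<Omega>"
      using that by (auto intro: borel_measurable_valuation)
    show ?thesis
      by measurable
  qed
  then show ?thesis
    unfolding committed_price_def[abs_def] commit_price_def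
    by (intro borel_measurable_times borel_measurable_const borel_measurable_sum)
qed

lemma expectation_committed_price_eq_sum:
  "expectation (committed_price n) = (1 / (2 * real n)) * (\<Sum>i=1..2 * n. law.expectation (exploration_bit n i))"
proof -
  have "expectation (committed_price n)
      = (1 / (2 * real n)) * expectation (\<lambda>\<omega>. \<Sum>i=1..2 * n. exploration_bit n i (V i \<omega>))"
    unfolding committed_price_def commit_price_def by simp
  also have "expectation (\<lambda>\<omega>. \<Sum>i=1..2 * n. exploration_bit n i (V i \<omega>))
      = (\<Sum>i=1..2 * n. expectation (\<lambda>\<omega>. exploration_bit n i (V i \<omega>)))"
    by (rule Bochner_Integration.integral_sum) (auto intro!: integrable_valuation law.integrable_exploration_bit)
  also have "\<dots> = (\<Sum>i=1..2 * n. law.expectation (exploration_bit n i))"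
    by (intro sum.cong refl expectation_valuation) auto
  finally show ?thesis .
qed

lemma committed_price_unit_interval: "n \<ge> 1 \<Longrightarrow> 0 \<le> committed_price n \<omega> \<and> committed_price n \<omega> \<le> 1"
  unfolding committed_price_def by (rule commit_price_unit_interval)

lemma integrable_committed_price:
  assumes "n \<ge> 1"
  shows "integrable \<Omega> (committed_price n)" "integrable \<Omega> (\<lambda>\<omega>. (committed_price n \<omega>)\<^sup>2)"
  using committed_price_unit_interval[OF assms]
  by (auto intro!: integrable_const_bound[where B=1] simp: abs_le_iff power_le_one)

lemma variance_committed_price_le:
  assumes "n \<ge> 1"
  shows "variance (committed_price n) \<le> 1 / (2 * real n)"
proof -
  define X where "X i \<omega> = exploration_bit n i (V i \<omega>) - law.expectation (exploration_bit n i)" for i \<omega>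
  have X_bounded: "\<bar>X i \<omega>\<bar> \<le> 1" for i \<omega>
  proof -
    have "0 \<le> law.expectation (exploration_bit n i)"
      by (intro Bochner_Integration.integral_nonneg) (simp add: exploration_bit_def)
    moreover have "law.expectation (exploration_bit n i) \<le> law.expectation (\<lambda>_. 1)"
      by (intro integral_mono law.integrable_exploration_bit) (auto simp: exploration_bit_def)
    ultimately show ?thesis
      by (auto simp: X_def exploration_bit_def)
  qed
  have uncorrelated: "expectation (\<lambda>\<omega>. X i \<omega> * X j \<omega>) = 0"
    if "i \<in> {1..2 * n}" "j \<in> {1..2 * n}" "i \<noteq> j" for i j
    using indep_valuations_product(2)[of i j "\<lambda>v. exploration_bit n i v - law.expectation (exploration_bit n i)"
        "\<lambda>v. exploration_bit n j v - law.expectation (exploration_bit n j)"]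
      that law.integrable_exploration_bit
    by (simp add: X_def Bochner_Integration.integral_diff)
  have centred: "committed_price n \<omega> - expectation (committed_price n) = (\<Sum>i=1..2 * n. X i \<omega>) / (2 * real n)" for \<omega>
    by (simp add: expectation_committed_price_eq_sum committed_price_def commit_price_def X_def
        sum_subtractf divide_simps)
  have "variance (committed_price n) = expectation (\<lambda>\<omega>. (\<Sum>i=1..2 * n. X i \<omega>)\<^sup>2) / (2 * real n)\<^sup>2"
    by (simp add: centred power_divide)
  also have "\<dots> \<le> real (card {1..2 * n}) / (2 * real n)\<^sup>2"
  proof (intro divide_right_mono expectation_square_sum_uncorrelated_le)
    show "X i \<in> borel_measurable \<Omega>" if "i \<in> {1..2 * n}" for i
    proof -
      have [measurable]: "V i \<in> borel_measurable \<Omega>"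
        using that by (auto intro: borel_measurable_valuation)
      show ?thesis
        unfolding X_def by measurable
    qed
  qed (use X_bounded uncorrelated in auto)
  also have "\<dots> = 1 / (2 * real n)"
    using assms by (simp add: power2_eq_square)
  finally show ?thesis .
qed

lemma expectation_committed_price_bounds:
  assumes "n \<ge> 1"
  shows "law.mean - 1 / real n \<le> expectation (committed_price n)
    \<and> expectation (committed_price n) \<le> law.mean"
proof -
  have "law.expectation (\<lambda>v. commit_price n (\<lambda>_. v))
      = (1 / (2 * real n)) * law.expectation (\<lambda>v. \<Sum>i=1..2 * n. exploration_bit n i v)"
    unfolding commit_price_def by simp
  also have "\<dots> = expectation (committed_price n)"
    unfolding expectation_committed_price_eq_sum
    by (subst Bochner_Integration.integral_sum) (simp_all add: law.integrable_exploration_bit)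
  finally have "expectation (committed_price n) = law.expectation (\<lambda>v. commit_price n (\<lambda>_. v))" ..
  with law.expectation_commit_price_const_bounds[OF assms] show ?thesis
    by simp
qed

lemma expectation_square_committed_error_le:
  assumes "n \<ge> 1"
  shows "expectation (\<lambda>\<omega>. (committed_price n \<omega> - law.mean)\<^sup>2) \<le> 1 / (real n)\<^sup>2 + 1 / (2 * real n)"
proof -
  have "\<bar>expectation (committed_price n) - law.mean\<bar> \<le> \<bar>1 / real n\<bar>"
    using expectation_committed_price_bounds[OF assms] by auto
  then have bias: "(expectation (committed_price n) - law.mean)\<^sup>2 \<le> 1 / (real n)\<^sup>2"
    unfolding abs_le_square_iff by (simp add: power_divide)
  have "expectation (\<lambda>\<omega>. (committed_price n \<omega> - law.mean)\<^sup>2)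
      = variance (committed_price n) + (expectation (committed_price n) - law.mean)\<^sup>2"
    by (rule expectation_square_diff_const[OF integrable_committed_price[OF assms]])
  with bias variance_committed_price_le[OF assms] show ?thesis
    by linarith
qed

text \<open>The committed price depends only on the first 2n valuations, so it is independent
  of any later pair; conditioning on it, the trade at that price yields gain(price) in expectation.\<close>
lemma expectation_gft_committed_price_eq:
  assumes ab: "a \<noteq> b" "a > 2 * n" "b > 2 * n"
  shows "integrable \<Omega> (\<lambda>\<omega>. law.gain (committed_price n \<omega>))"
    and "expectation (\<lambda>\<omega>. gft (committed_price n \<omega>) (V a \<omega>) (V b \<omega>))
      = expectation (\<lambda>\<omega>. law.gain (committed_price n \<omega>))"
proof -
  let ?N1 = "PiM {1..2 * n} (\<lambda>_. borel) :: (nat \<Rightarrow> real) measure"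
  let ?N2 = "PiM {a, b} (\<lambda>_. borel) :: (nat \<Rightarrow> real) measure"
  define X Y where "X \<omega> = restrict (\<lambda>i. V i \<omega>) {1..2 * n}" and "Y \<omega> = restrict (\<lambda>i. V i \<omega>) {a, b}"
    for \<omega>
  define h where "h z = gft (commit_price n (fst z)) (snd z a) (snd z b)" for z
  have indep: "indep_var ?N1 X ?N2 Y"
    unfolding X_def Y_def using ab by (intro indep_var_restrict[OF indep_valuations]) auto
  have [measurable]: "commit_price n \<in> borel_measurable ?N1"
    by (rule borel_measurable_commit_price) simp
  have [measurable]: "(\<lambda>y. y a) \<in> borel_measurable ?N2" "(\<lambda>y. y b) \<in> borel_measurable ?N2"
    by (simp_all add: measurable_component_singleton)
  have h_meas: "h \<in> borel_measurable (?N1 \<Otimes>\<^sub>M ?N2)"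
    unfolding h_def by measurable
  have PX: "commit_price n (X \<omega>) = committed_price n \<omega>" for \<omega>
    unfolding X_def committed_price_def by (rule commit_price_cong) simp
  have hXY: "h (X \<omega>, Y \<omega>) = gft (committed_price n \<omega>) (V a \<omega>) (V b \<omega>)" for \<omega>
    by (simp add: h_def PX Y_def)
  have frozen: "expectation (\<lambda>\<omega>'. h (x, Y \<omega>')) = law.gain (commit_price n x)" for x
    using expectation_gft_valuations[of a b "commit_price n x"] ab by (simp add: h_def Y_def)
  have int: "integrable \<Omega> (\<lambda>\<omega>. h (X \<omega>, Y \<omega>))"
    unfolding hXY using ab by (intro integrable_gft_valuations) auto
  note freeze = indep_var_integral_freeze[OF indep h_meas int]
  show "integrable \<Omega> (\<lambda>\<omega>. law.gain (committed_price n \<omega>))"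
    using freeze(1) by (simp add: frozen PX)
  show "expectation (\<lambda>\<omega>. gft (committed_price n \<omega>) (V a \<omega>) (V b \<omega>))
      = expectation (\<lambda>\<omega>. law.gain (committed_price n \<omega>))"
    using freeze(2) by (simp add: frozen PX hXY)
qed

lemma expectation_gft_committed_price_ge:
  assumes n: "n \<ge> 1" and ab: "a \<noteq> b" "a > 2 * n" "b > 2 * n"
  shows "law.gain law.mean - 2 * M * expectation (\<lambda>\<omega>. (committed_price n \<omega> - law.mean)\<^sup>2)
    \<le> expectation (\<lambda>\<omega>. gft (committed_price n \<omega>) (V a \<omega>) (V b \<omega>))"
proof -
  have int_sq: "integrable \<Omega> (\<lambda>\<omega>. (committed_price n \<omega> - law.mean)\<^sup>2)"
    using integrable_committed_price[OF n] by (simp add: power2_diff)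
  have "law.gain law.mean - 2 * M * expectation (\<lambda>\<omega>. (committed_price n \<omega> - law.mean)\<^sup>2)
      = expectation (\<lambda>\<omega>. law.gain law.mean - 2 * M * (committed_price n \<omega> - law.mean)\<^sup>2)"
    using int_sq by (simp add: Bochner_Integration.integral_diff prob_space)
  also have "\<dots> \<le> expectation (\<lambda>\<omega>. law.gain (committed_price n \<omega>))"
    using law.gain_mean_minus_gain_le int_sq expectation_gft_committed_price_eq(1)[OF ab]
    by (intro integral_mono) (auto simp: algebra_simps)
  also have "\<dots> = expectation (\<lambda>\<omega>. gft (committed_price n \<omega>) (V a \<omega>) (V b \<omega>))"
    by (rule expectation_gft_committed_price_eq(2)[OF ab, symmetric])
  finally show ?thesis .
qed

lemma integrable_gft_round:
  "t \<ge> 1 \<Longrightarrow> Q \<in> borel_measurable \<Omega> \<Longrightarrow> integrable \<Omega> (\<lambda>\<omega>. GFT V t (Q \<omega>) \<omega>)"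
  using integrable_gft_valuations[of "2 * t - 1" "2 * t" Q] by (simp add: GFT_def)

lemma expectation_gft_round: "t \<ge> 1 \<Longrightarrow> expectation (\<lambda>\<omega>. GFT V t q \<omega>) = law.gain q"
  using expectation_gft_valuations[of "2 * t - 1" "2 * t" q] by (simp add: GFT_def)

lemma best_fixed_price_le: "(SUP p\<in>{0..1}. expectation (\<lambda>\<omega>. \<Sum>t=1..T. GFT V t p \<omega>)) \<le> real T * law.gain law.mean"
proof (rule cSUP_least)
  fix p :: real
  have "expectation (\<lambda>\<omega>. \<Sum>t=1..T. GFT V t p \<omega>) = (\<Sum>t=1..T. law.gain p)"
    by (simp add: Bochner_Integration.integral_sum integrable_gft_round expectation_gft_round)
  also have "\<dots> \<le> real T * law.gain law.mean"
    using law.gain_le_gain_mean[of p] by (simp add: mult_left_mono)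
  finally show "expectation (\<lambda>\<omega>. \<Sum>t=1..T. GFT V t p \<omega>) \<le> real T * law.gain law.mean" .
qed simp

lemma regret_le_half_horizon: "regret \<Omega> V P T \<le> real T / 2"
proof -
  have "0 \<le> expectation (\<lambda>\<omega>. \<Sum>t=1..T. GFT V t (P t \<omega>) \<omega>)"
    by (intro Bochner_Integration.integral_nonneg sum_nonneg) (simp add: GFT_def gft_nonneg)
  moreover have "real T * law.gain law.mean \<le> real T * (1/2)"
    using law.gain_mean_le_half by (intro mult_left_mono) auto
  ultimately show ?thesis
    using best_fixed_price_le[of T] unfolding regret_def by simp
qed

lemma borel_measurable_etc_price: "etc_price n V t \<in> borel_measurable \<Omega>"
proof (cases "t \<le> n")
  case True
  then have "etc_price n V t = (\<lambda>\<omega>. real t / real n)"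
    by (simp add: etc_price_def fun_eq_iff)
  then show ?thesis
    by simp
next
  case False
  then have "etc_price n V t = committed_price n"
    by (auto simp: etc_price_eq_commit_price committed_price_def fun_eq_iff)
  then show ?thesis
    by simp
qed

lemma expectation_gft_etc_ge:
  assumes "n \<ge> 1" "t \<ge> 1"
  shows "(if t \<le> n then 0
          else law.gain law.mean - 2 * M * expectation (\<lambda>\<omega>. (committed_price n \<omega> - law.mean)\<^sup>2))
    \<le> expectation (\<lambda>\<omega>. GFT V t (etc_price n V t \<omega>) \<omega>)"
proof (cases "t \<le> n")
  case True
  then show ?thesis
    by (simp add: GFT_def gft_nonneg)
next
  case False
  then show ?thesis
    using expectation_gft_committed_price_ge[OF assms(1), of "2 * t - 1" "2 * t"] assms
    by (simp add: GFT_def etc_price_eq_commit_price committed_price_def)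
qed

lemma regret_etc_le:
  assumes n: "n \<ge> 1" and T: "n \<le> T"
  shows "regret \<Omega> V (etc_price n V) T
    \<le> real n - 1/2 + M * (real T - real n) * (2 / (real n)\<^sup>2 + 1 / real n)"
proof -
  define c where "c = law.gain law.mean - 2 * M * expectation (\<lambda>\<omega>. (committed_price n \<omega> - law.mean)\<^sup>2)"
  have "(real T - real n) * c = (\<Sum>t\<in>{n<..T}. c)"
    using T by simp
  also have "\<dots> = (\<Sum>t=1..T. if t \<le> n then 0 else c)"
    by (rule sum.mono_neutral_cong_left) (use n in auto)
  also have "\<dots> \<le> (\<Sum>t=1..T. expectation (\<lambda>\<omega>. GFT V t (etc_price n V t \<omega>) \<omega>))"
    unfolding c_def by (intro sum_mono expectation_gft_etc_ge[OF n]) simp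
  also have "\<dots> = expectation (\<lambda>\<omega>. \<Sum>t=1..T. GFT V t (etc_price n V t \<omega>) \<omega>)"
    by (simp add: Bochner_Integration.integral_sum integrable_gft_round borel_measurable_etc_price)
  finally have committed_gain: "(real T - real n) * c \<le> \<dots>" .
  have "regret \<Omega> V (etc_price n V) T \<le> real T * law.gain law.mean - (real T - real n) * c"
    using best_fixed_price_le[of T] committed_gain unfolding regret_def by simp
  also have "\<dots> = real n * law.gain law.mean
      + (real T - real n) * (2 * M * expectation (\<lambda>\<omega>. (committed_price n \<omega> - law.mean)\<^sup>2))"
    by (simp add: c_def algebra_simps)
  also have "\<dots> \<le> real n * (1/2) + (real T - real n) * (2 * M * (1 / (real n)\<^sup>2 + 1 / (2 * real n)))"
    using T law.density_bound_pos
    by (intro add_mono mult_left_mono law.gain_mean_le_half expectation_square_committed_error_le[OF n]) auto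
  also have "\<dots> \<le> real n - 1/2 + M * (real T - real n) * (2 / (real n)\<^sup>2 + 1 / real n)"
    using n by (simp add: field_simps)
  finally show ?thesis .
qed

lemma regret_etc_sqrt_le:
  "regret \<Omega> V (etc_price (nat \<lceil>sqrt (M * real T)\<rceil>) V) T \<le> 2.5 + 2 * sqrt (M * real T)"
proof -
  define s n where "s = sqrt (M * real T)" and "n = nat \<lceil>s\<rceil>"
  have s: "0 \<le> s" "s\<^sup>2 = M * real T"
    using law.density_bound_pos by (simp_all add: s_def)
  have n: "s \<le> real n" "real n < s + 1"
    unfolding n_def using s(1) by linarith+
  consider "T = 0" | "T > 0" "n \<le> T" | "n > T"
    by linarith
  then have "regret \<Omega> V (etc_price n V) T \<le> 2.5 + 2 * s"
  proof cases
    case 1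
    then show ?thesis
      using regret_le_half_horizon[of "etc_price n V" T] s by simp
  next
    case 2
    then have "0 < s"
      using law.density_bound_pos by (simp add: s_def)
    moreover have "M * (real T - real n) \<le> s\<^sup>2"
      using s law.density_bound_pos by (simp add: algebra_simps)
    ultimately show ?thesis
      using regret_etc_le[of n T] etc_tuning_arith[OF _ n, of "M * (real T - real n)"]
        2 n s law.density_bound_pos by auto
  next
    case 3
    then show ?thesis
      using regret_le_half_horizon[of "etc_price n V" T] n s by simp
  qed
  then show ?thesis
    by (simp add: s_def n_def)
qed

end

theorem theorem4p2:
  fixes \<Omega> :: "'a measure" and V :: "nat \<Rightarrow> 'a \<Rightarrow> real"
    and \<nu> :: "real measure" and f :: "real \<Rightarrow> real" and M :: real
  assumes "prob_space \<Omega>"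
    and "\<And>i. i \<ge> 1 \<Longrightarrow> V i \<in> borel_measurable \<Omega>"
    and "prob_space.indep_vars \<Omega> (\<lambda>_. borel) V {1..}"
    and "\<And>i. i \<ge> 1 \<Longrightarrow> distr \<Omega> borel (V i) = \<nu>"
    and "f \<in> borel_measurable borel"
    and "\<nu> = density lborel (\<lambda>x. ennreal (f x))"
    and "emeasure \<nu> {0..1} = 1"
    and "M > 0"
    and "\<And>x. 0 \<le> f x \<and> f x \<le> M"
  shows "(\<forall>T0 T::nat. 1 \<le> T0 \<longrightarrow> T0 \<le> T \<longrightarrow>
            regret \<Omega> V (etc_price T0 V) T
              \<le> real T0 - 1/2 + M * (real T - real T0) * (2 / (real T0)^2 + 1 / real T0))
       \<and> (\<forall>T::nat. regret \<Omega> V (etc_price (nat \<lceil>sqrt (M * real T)\<rceil>) V) T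
              \<le> 2.5 + 2 * sqrt (M * real T))"
proof -
  have "prob_space \<nu>"
    using prob_space.prob_space_distr[OF assms(1) assms(2)[of 1]] assms(4)[of 1] by simp
  then interpret brokerage \<nu> f M \<Omega> V
    using assms
    by (intro brokerage.intro bounded_density_law.intro bounded_density_law_axioms.intro
        brokerage_axioms.intro) auto
  show ?thesis
    using regret_etc_le regret_etc_sqrt_le by auto
qed

end
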